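(* Let $n\ge 2$, $\zeta=2\pi/n$, $s_k=2\sin(k\pi/n)$, consider $V$ as in the context with $\sigma=1$, and define for $a>0$ $$S(a)=\frac{1}{as_1}-\frac{1}{2s_1^2}\sum_{k=1}^{n-1}W'(a^2s_k^2)\,s_k^2.$$ Then $S(a)\to\infty$ as $a\to0^+$ and $S(a)\to0$ as $a\to+\infty$; consequently there is at least one $\alpha>0$ with $S(\alpha)=1$, and for any such $\alpha$ the configuration $\mathbf a=(a_1,\dots,a_n)$ with $a_j=\alpha e^{ij\zeta}$ (identifying $\mathbb R^2$ with $\mathbb C$) is a critical point of $V$ (a circular equilibrium).
   Context: For $u=(u_1,\dots,u_n)\in(\mathbb R^2)^n$ let $$V(u)=\sum_{j=1}^{n-1}U(|u_{j+1}-u_j|^2)+U(|u_n-u_1|^2)+\sum_{1\le j<k\le n}W(|u_j-u_k|^2),$$ where $U(x)=x-2x^{1/2}$ and $W\in C^2((0,\infty))$ satisfies $\lim_{x\to0}W(x)=\lim_{x\to0}(-W'(x))=+\infty$ and $\lim_{x\to\infty}W(x)=\lim_{x\to\infty}W'(x)=0$. $V$ is defined on $\Omega=\{u\in\mathbb R^{2n}:u_j\ne u_k\text{ for }j\ne k\}$. *)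

theory Defs
  imports "HOL-Analysis.Analysis"
begin

text \<open>Configurations are u :: nat => complex, only the values u 1, ..., u n matter
  (R^2 identified with C).\<close>

definition U_pot :: "real \<Rightarrow> real" where
  "U_pot x = x - 2 * sqrt x"

definition V_pot :: "nat \<Rightarrow> (real \<Rightarrow> real) \<Rightarrow> (nat \<Rightarrow> complex) \<Rightarrow> real" where
  "V_pot n W u =
     (\<Sum>j=1..n-1. U_pot ((cmod (u (j+1) - u j))^2)) + U_pot ((cmod (u n - u 1))^2)
     + (\<Sum>j=1..n. \<Sum>k=j+1..n. W ((cmod (u j - u k))^2))"

definition Omega :: "nat \<Rightarrow> (nat \<Rightarrow> complex) set" where
  "Omega n = {u. \<forall>j\<in>{1..n}. \<forall>k\<in>{1..n}. j \<noteq> k \<longrightarrow> u j \<noteq> u k}"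

definition C2_pos :: "(real \<Rightarrow> real) \<Rightarrow> bool" where
  "C2_pos W \<longleftrightarrow> (\<forall>x>0. W differentiable (at x)) \<and>
     (\<forall>x>0. deriv W differentiable (at x)) \<and> continuous_on {0<..} (deriv (deriv W))"

definition critical_point :: "nat \<Rightarrow> (real \<Rightarrow> real) \<Rightarrow> (nat \<Rightarrow> complex) \<Rightarrow> bool" where
  "critical_point n W u \<longleftrightarrow> u \<in> Omega n \<and>
     (\<forall>j\<in>{1..n}. \<forall>v::complex.
        ((\<lambda>t::real. V_pot n W (u(j := u j + of_real t * v))) has_real_derivative 0) (at 0))"

definition S_fun :: "nat \<Rightarrow> (real \<Rightarrow> real) \<Rightarrow> real \<Rightarrow> real" where
  "S_fun n W a = (let s = (\<lambda>k::nat. 2 * sin (real k * pi / real n)) in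
     1 / (a * s 1) - 1 / (2 * (s 1)^2) * (\<Sum>k=1..n-1. deriv W (a^2 * (s k)^2) * (s k)^2))"

end

(*
  The derivative of V at u in the j-th point along v is Re (G * cnj v) for an explicit complex
  gradient G.  For the regular polygon a j = alpha * e^(i j zeta) every mutual distance depends
  only on the cyclic index difference m, being alpha * s m, so G is a sum over m of real weights
  times a j * (1 - e^(i m zeta)).  The weights are invariant under m -> n - m, so the sine parts
  cancel and G = 2 (s 1)^2 (1 - S alpha) a j, which vanishes when S alpha = 1.
  Such an alpha exists by the intermediate value theorem, since S is continuous on (0, infinity),
  tends to infinity at 0 (W' is negative there) and to 0 at infinity.
*)

theory Submission
  imports Defs
begin

text \<open>Half the gradient of \<open>u \<mapsto> F (cmod (u p - u q)\<^sup>2)\<close> with respect to \<open>u j\<close>,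
  for \<open>F'\<close> the derivative of \<open>F\<close>.\<close>
definition pair_grad :: "(real \<Rightarrow> real) \<Rightarrow> (nat \<Rightarrow> complex) \<Rightarrow> nat \<Rightarrow> nat \<Rightarrow> nat \<Rightarrow> complex" where
  "pair_grad F' u j p q =
     of_real (F' ((cmod (u p - u q))\<^sup>2) * (of_bool (p = j) - of_bool (q = j))) * (u p - u q)"

lemma pair_grad_commute: "pair_grad F' u j p q = pair_grad F' u j q p"
  by (auto simp: pair_grad_def norm_minus_commute algebra_simps)

lemma pair_grad_eq_0: "p \<noteq> j \<Longrightarrow> q \<noteq> j \<Longrightarrow> pair_grad F' u j p q = 0"
  by (simp add: pair_grad_def)

lemma has_real_derivative_cmod_power2_along:
  "((\<lambda>t::real. (cmod (w + of_real t * z))\<^sup>2) has_real_derivative 2 * Re (w * cnj z)) (at 0)"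
proof -
  have "(\<lambda>t::real. (cmod (w + of_real t * z))\<^sup>2) = (\<lambda>t. (Re w + t * Re z)\<^sup>2 + (Im w + t * Im z)\<^sup>2)"
    by (auto simp: cmod_power2)
  then show ?thesis
    by (auto intro!: derivative_eq_intros simp: algebra_simps)
qed

lemma pair_term_has_real_derivative_along:
  assumes "(F has_real_derivative F' ((cmod (u p - u q))\<^sup>2)) (at ((cmod (u p - u q))\<^sup>2))"
  shows "((\<lambda>t. F ((cmod ((u(j := u j + of_real t * v)) p - (u(j := u j + of_real t * v)) q))\<^sup>2))
           has_real_derivative 2 * Re (pair_grad F' u j p q * cnj v)) (at 0)"
proof -
  define \<delta> :: real where "\<delta> = of_bool (p = j) - of_bool (q = j)"
  have perturb: "(u(j := u j + of_real t * v)) p - (u(j := u j + of_real t * v)) q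
          = (u p - u q) + of_real t * (of_real \<delta> * v)" for t
    by (auto simp: \<delta>_def algebra_simps)
  have "((\<lambda>t. F ((cmod ((u p - u q) + of_real t * (of_real \<delta> * v)))\<^sup>2)) has_real_derivative
          F' ((cmod (u p - u q))\<^sup>2) * (2 * Re ((u p - u q) * cnj (of_real \<delta> * v)))) (at 0)"
    using DERIV_chain2[OF _ has_real_derivative_cmod_power2_along,
        of F "F' ((cmod (u p - u q))\<^sup>2)" "u p - u q" "of_real \<delta> * v"] assms
    by (simp only: of_real_0 mult_zero_left add_0_right)
  moreover have "F' ((cmod (u p - u q))\<^sup>2) * (2 * Re ((u p - u q) * cnj (of_real \<delta> * v)))
                   = 2 * Re (pair_grad F' u j p q * cnj v)"
    by (simp add: pair_grad_def \<delta>_def algebra_simps)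
  ultimately show ?thesis
    unfolding perturb by simp
qed

definition U_pot_deriv :: "real \<Rightarrow> real" where
  "U_pot_deriv x = 1 - 1 / sqrt x"

lemma U_pot_has_real_derivative: "x > 0 \<Longrightarrow> (U_pot has_real_derivative U_pot_deriv x) (at x)"
  unfolding U_pot_def[abs_def] U_pot_deriv_def
  by (auto intro!: derivative_eq_intros simp: field_simps)

definition V_grad :: "nat \<Rightarrow> (real \<Rightarrow> real) \<Rightarrow> (nat \<Rightarrow> complex) \<Rightarrow> nat \<Rightarrow> complex" where
  "V_grad n W' u j = 2 *
     ((\<Sum>i=1..n-1. pair_grad U_pot_deriv u j (i+1) i) + pair_grad U_pot_deriv u j n 1
      + (\<Sum>p=1..n. \<Sum>q=p+1..n. pair_grad W' u j p q))"

lemma V_pot_has_real_derivative_along: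
  assumes "n \<ge> 2" and "u \<in> Omega n"
    and W': "\<And>x. x > 0 \<Longrightarrow> (W has_real_derivative W' x) (at x)"
  shows "((\<lambda>t. V_pot n W (u(j := u j + of_real t * v))) has_real_derivative Re (V_grad n W' u j * cnj v)) (at 0)"
proof -
  have pos: "(cmod (u p - u q))\<^sup>2 > 0" if "p \<in> {1..n}" "q \<in> {1..n}" "p \<noteq> q" for p q
    using assms(2) that unfolding Omega_def by auto
  have "Re (V_grad n W' u j * cnj v) =
      (\<Sum>i=1..n-1. 2 * Re (pair_grad U_pot_deriv u j (i+1) i * cnj v))
      + 2 * Re (pair_grad U_pot_deriv u j n 1 * cnj v)
      + (\<Sum>p=1..n. \<Sum>q=p+1..n. 2 * Re (pair_grad W' u j p q * cnj v))"
  proof -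
    have Re2: "Re (2 * z) = 2 * Re z" for z by simp
    show ?thesis
      unfolding V_grad_def mult.assoc Re2 distrib_right sum_distrib_right plus_complex.sel Re_sum
      by (simp add: sum_distrib_left distrib_left)
  qed
  moreover have "((\<lambda>t. V_pot n W (u(j := u j + of_real t * v))) has_real_derivative
      (\<Sum>i=1..n-1. 2 * Re (pair_grad U_pot_deriv u j (i+1) i * cnj v))
      + 2 * Re (pair_grad U_pot_deriv u j n 1 * cnj v)
      + (\<Sum>p=1..n. \<Sum>q=p+1..n. 2 * Re (pair_grad W' u j p q * cnj v))) (at 0)"
    unfolding V_pot_def
    by (intro DERIV_add DERIV_sum pair_term_has_real_derivative_along U_pot_has_real_derivative W' pos)
       (use assms(1) in auto)
  ultimately show ?thesis by simp
qed

lemma critical_point_if_V_grad_eq_0: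
  assumes "n \<ge> 2" and "u \<in> Omega n"
    and "\<And>x. x > 0 \<Longrightarrow> (W has_real_derivative W' x) (at x)"
    and "\<And>j. j \<in> {1..n} \<Longrightarrow> V_grad n W' u j = 0"
  shows "critical_point n W u"
  unfolding critical_point_def
proof (intro conjI ballI allI)
  fix j v assume "j \<in> {1..n}"
  have "((\<lambda>t. V_pot n W (u(j := u j + of_real t * v))) has_real_derivative Re (V_grad n W' u j * cnj v)) (at 0)"
    by (rule V_pot_has_real_derivative_along) (use assms in auto)
  then show "((\<lambda>t. V_pot n W (u(j := u j + of_real t * v))) has_real_derivative 0) (at 0)"
    using assms(4)[OF \<open>j \<in> {1..n}\<close>] by simp
qed (rule assms(2))

definition cyc_add :: "nat \<Rightarrow> nat \<Rightarrow> nat \<Rightarrow> nat" where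
  "cyc_add n j m = (if j + m \<le> n then j + m else j + m - n)"

lemma bij_betw_cyc_add:
  assumes "j \<in> {1..n}"
  shows "bij_betw (cyc_add n j) {1..n-1} ({1..n} - {j})"
proof (rule bij_betw_byWitness[where f' = "\<lambda>k. if j < k then k - j else k + n - j"])
qed (use assms in \<open>auto simp: cyc_add_def\<close>)

lemma cyc_add_in_others: "j \<in> {1..n} \<Longrightarrow> m \<in> {1..n-1} \<Longrightarrow> cyc_add n j m \<in> {1..n} - {j}"
  using bij_betw_apply[OF bij_betw_cyc_add] by blast

lemma sum_cyclic_edges_local:
  fixes g :: "nat \<Rightarrow> nat \<Rightarrow> 'a::comm_monoid_add"
  assumes "n \<ge> 2" and j: "j \<in> {1..n}"
    and sym: "\<And>p q. g p q = g q p" and vanish: "\<And>p q. p \<noteq> j \<Longrightarrow> q \<noteq> j \<Longrightarrow> g p q = 0"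
  shows "(\<Sum>i=1..n-1. g (i+1) i) + g n 1 = g j (cyc_add n j 1) + g j (cyc_add n j (n-1))"
proof -
  have "(\<Sum>i=1..n-1. g (i+1) i)
      = (\<Sum>i=1..n-1. (if i = j - 1 then g j (j - 1) else 0) + (if i = j then g j (j + 1) else 0))"
  proof (rule sum.cong)
    fix i assume "i \<in> {1..n-1}"
    then show "g (i+1) i = (if i = j - 1 then g j (j - 1) else 0) + (if i = j then g j (j + 1) else 0)"
      using vanish[of "i+1" i] sym[of "j+1" j] j by auto
  qed simp
  also have "\<dots> = (if j - 1 \<in> {1..n-1} then g j (j - 1) else 0) + (if j \<in> {1..n-1} then g j (j + 1) else 0)"
    by (simp only: sum.distrib sum.delta finite_atLeastAtMost)
  finally have edges: "(\<Sum>i=1..n-1. g (i+1) i) = \<dots>" .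
  have closing: "g n 1 = (if j = 1 then g j n else 0) + (if j = n then g j 1 else 0)"
    using vanish[of n 1] sym[of n 1] assms(1) by auto
  have succ: "cyc_add n j 1 = (if j = n then 1 else j + 1)"
    and pred: "cyc_add n j (n-1) = (if j = 1 then n else j - 1)"
    using j by (auto simp: cyc_add_def)
  consider "j = 1" | "j = n" | "1 < j" "j < n"
    using j by fastforce
  then show ?thesis
  proof cases
    case 1
    then have "j - 1 \<notin> {1..n-1}" "j \<in> {1..n-1}" "j \<noteq> n" using assms(1) by auto
    then show ?thesis using edges closing succ pred 1 by (simp add: add.commute)
  next
    case 2
    then have "j - 1 \<in> {1..n-1}" "j \<notin> {1..n-1}" "j \<noteq> 1" using assms(1) by auto
    then show ?thesis using edges closing succ pred 2 by (simp add: add.commute)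
  next
    case 3
    then have "j - 1 \<in> {1..n-1}" "j \<in> {1..n-1}" "j \<noteq> 1" "j \<noteq> n" by auto
    then show ?thesis using edges closing succ pred by (simp add: add.commute)
  qed
qed

lemma sum_pairs_local:
  fixes g :: "nat \<Rightarrow> nat \<Rightarrow> 'a::comm_monoid_add"
  assumes j: "j \<in> {1..n}"
    and sym: "\<And>p q. g p q = g q p" and vanish: "\<And>p q. p \<noteq> j \<Longrightarrow> q \<noteq> j \<Longrightarrow> g p q = 0"
  shows "(\<Sum>p=1..n. \<Sum>q=p+1..n. g p q) = (\<Sum>m=1..n-1. g j (cyc_add n j m))"
proof -
  have inner: "(\<Sum>q=p+1..n. g p q)
      = (if p = j then \<Sum>q=j+1..n. g j q else 0) + (if p < j then g j p else 0)" if "p \<in> {1..n}" for p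
  proof (cases "p = j")
    case False
    then have "(\<Sum>q=p+1..n. g p q) = (\<Sum>q=p+1..n. if q = j then g j p else 0)"
      using vanish[of p] sym[of j p] by (intro sum.cong) auto
    then show ?thesis
      using False j by (simp add: sum.delta)
  qed simp
  have "(\<Sum>p=1..n. \<Sum>q=p+1..n. g p q) = (\<Sum>q=j+1..n. g j q) + (\<Sum>p\<in>{1..n}. if p < j then g j p else 0)"
    using j by (simp only: sum.cong[OF refl inner] sum.distrib sum.delta finite_atLeastAtMost) simp
  also have "(\<Sum>p\<in>{1..n}. if p < j then g j p else 0) = (\<Sum>p=1..j-1. g j p)"
    using j by (simp add: sum.If_cases) (intro sum.cong; auto)
  also have "(\<Sum>q=j+1..n. g j q) + (\<Sum>p=1..j-1. g j p) = (\<Sum>k\<in>{1..n} - {j}. g j k)"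
  proof -
    have "{1..n} - {j} = {j+1..n} \<union> {1..j-1}" using j by auto
    then show ?thesis by (simp add: sum.union_disjoint)
  qed
  also have "\<dots> = (\<Sum>m=1..n-1. g j (cyc_add n j m))"
    using sum.reindex_bij_betw[OF bij_betw_cyc_add[OF j], of "g j"] by simp
  finally show ?thesis .
qed

definition chord :: "nat \<Rightarrow> nat \<Rightarrow> real" where
  "chord n k = 2 * sin (real k * pi / real n)"

definition regular_polygon :: "nat \<Rightarrow> real \<Rightarrow> nat \<Rightarrow> complex" where
  "regular_polygon n \<alpha> = (\<lambda>j. complex_of_real \<alpha> * cis (real j * (2 * pi / real n)))"

lemma chord_pos: "0 < k \<Longrightarrow> k < n \<Longrightarrow> chord n k > 0"
  unfolding chord_def by (auto intro!: sin_gt_zero simp: field_simps)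

lemma chord_1_pos: "n \<ge> 2 \<Longrightarrow> chord n 1 > 0"
  by (rule chord_pos) auto

lemma chord_power2_pos:
  assumes "k \<in> {1..n-1}"
  shows "(chord n k)\<^sup>2 > 0"
proof -
  have "0 < k" "k < n"
    using assms by auto
  then show ?thesis
    using chord_pos[of k n] by simp
qed

lemma chord_diff: "k \<le> n \<Longrightarrow> chord n (n - k) = chord n k"
proof -
  assume "k \<le> n"
  then have "real (n - k) * pi / real n = pi - real k * pi / real n" if "n > 0"
    using that by (simp add: of_nat_diff field_simps)
  then show ?thesis
    using \<open>k \<le> n\<close> by (cases "n = 0") (auto simp: chord_def)
qed

lemma chord_power2: "(chord n k)\<^sup>2 = 2 - 2 * cos (real k * (2 * pi / real n))"
proof -
  have "real k * (2 * pi / real n) = 2 * (real k * pi / real n)" by simp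
  then show ?thesis
    unfolding chord_def by (simp only: cos_double_sin power_mult_distrib) simp
qed

lemma cmod_1_minus_cis_power2: "(cmod (1 - cis x))\<^sup>2 = 2 - 2 * cos x"
proof -
  have "(cmod (1 - cis x))\<^sup>2 = (1 - cos x)\<^sup>2 + (sin x)\<^sup>2" by (simp add: cmod_power2)
  then show ?thesis
    using sin_cos_squared_add[of x] by (simp add: power2_eq_square algebra_simps)
qed

lemma sum_reflected_weights_sin:
  fixes c :: "nat \<Rightarrow> real"
  assumes "\<And>m. m \<in> {1..n-1} \<Longrightarrow> c (n - m) = c m"
  shows "(\<Sum>m=1..n-1. c m * sin (real m * (2 * pi / real n))) = 0"
proof -
  define f where "f m = c m * sin (real m * (2 * pi / real n))" for m
  have "sum f {1..n-1} = (\<Sum>m=1..n-1. f (n - 1 + 1 - m))"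
    by (rule sum.atLeastAtMost_rev)
  also have "\<dots> = (\<Sum>m=1..n-1. - f m)"
  proof (rule sum.cong)
    fix m assume m: "m \<in> {1..n-1}"
    then have "n - 1 + 1 - m = n - m"
      and "real (n - m) * (2 * pi / real n) = 2 * pi - real m * (2 * pi / real n)"
      by (auto simp: of_nat_diff field_simps)
    then show "f (n - 1 + 1 - m) = - f m"
      using assms[OF m] by (simp add: f_def)
  qed simp
  finally show ?thesis
    unfolding f_def[symmetric] by (simp add: sum_negf)
qed

lemma sum_reflected_weights_1_minus_cis:
  fixes c :: "nat \<Rightarrow> real"
  assumes "\<And>m. m \<in> {1..n-1} \<Longrightarrow> c (n - m) = c m"
  shows "(\<Sum>m=1..n-1. of_real (c m) * (1 - cis (real m * (2 * pi / real n))))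
       = of_real ((\<Sum>m=1..n-1. c m * (chord n m)\<^sup>2) / 2)"
proof -
  have "of_real (c m) * (1 - cis (real m * (2 * pi / real n)))
      = of_real (c m * (chord n m)\<^sup>2 / 2) - \<i> * of_real (c m * sin (real m * (2 * pi / real n)))" for m
    by (simp add: complex_eq_iff chord_power2 algebra_simps)
  then have "(\<Sum>m=1..n-1. of_real (c m) * (1 - cis (real m * (2 * pi / real n))))
      = of_real (\<Sum>m=1..n-1. c m * (chord n m)\<^sup>2 / 2)
        - \<i> * of_real (\<Sum>m=1..n-1. c m * sin (real m * (2 * pi / real n)))"
    by (simp only: sum_subtractf of_real_sum sum_distrib_left)
  then show ?thesis
    by (simp only: sum_reflected_weights_sin[of n c, OF assms] sum_divide_distrib) simp
qed

lemma regular_polygon_add: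
  "regular_polygon n \<alpha> (j + m) = regular_polygon n \<alpha> j * cis (real m * (2 * pi / real n))"
proof -
  have angle: "real (j + m) * (2 * pi / real n) = real j * (2 * pi / real n) + real m * (2 * pi / real n)"
    by (simp only: of_nat_add distrib_right)
  show ?thesis
    by (simp only: regular_polygon_def mult.assoc cis_mult[symmetric] angle)
qed

lemma regular_polygon_add_period: "n > 0 \<Longrightarrow> regular_polygon n \<alpha> (j + n) = regular_polygon n \<alpha> j"
  by (simp add: regular_polygon_add)

lemma regular_polygon_cyc_add:
  assumes "n > 0" and "m \<le> n"
  shows "regular_polygon n \<alpha> (cyc_add n j m) = regular_polygon n \<alpha> j * cis (real m * (2 * pi / real n))"
proof (cases "j + m \<le> n")
  case False
  then have "regular_polygon n \<alpha> (j + m - n) = regular_polygon n \<alpha> (j + m)"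
    using regular_polygon_add_period[OF assms(1), of \<alpha> "j + m - n"] by simp
  then show ?thesis
    using False by (simp add: cyc_add_def regular_polygon_add)
qed (simp add: cyc_add_def regular_polygon_add)

lemma regular_polygon_diff_cyc_add:
  assumes "n > 0" and "m \<le> n"
  shows "regular_polygon n \<alpha> j - regular_polygon n \<alpha> (cyc_add n j m)
       = regular_polygon n \<alpha> j * (1 - cis (real m * (2 * pi / real n)))"
  using regular_polygon_cyc_add[OF assms] by (simp add: algebra_simps)

lemma cmod_regular_polygon_diff_cyc_add:
  assumes "n > 0" and "m \<le> n"
  shows "(cmod (regular_polygon n \<alpha> j - regular_polygon n \<alpha> (cyc_add n j m)))\<^sup>2 = \<alpha>\<^sup>2 * (chord n m)\<^sup>2"
  unfolding regular_polygon_diff_cyc_add[OF assms]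
  by (simp add: regular_polygon_def norm_mult power_mult_distrib cmod_1_minus_cis_power2 chord_power2)

lemma regular_polygon_in_Omega:
  assumes "\<alpha> > 0"
  shows "regular_polygon n \<alpha> \<in> Omega n"
  unfolding Omega_def
proof (intro CollectI ballI impI)
  fix j k assume j: "j \<in> {1..n}" and "k \<in> {1..n}" and "j \<noteq> k"
  then have "k \<in> cyc_add n j ` {1..n-1}"
    using bij_betw_imp_surj_on[OF bij_betw_cyc_add[OF j]] by blast
  then obtain m where m: "m \<in> {1..n-1}" and km: "k = cyc_add n j m"
    by blast
  have "(cmod (regular_polygon n \<alpha> j - regular_polygon n \<alpha> k))\<^sup>2 = \<alpha>\<^sup>2 * (chord n m)\<^sup>2"
    using m unfolding km by (intro cmod_regular_polygon_diff_cyc_add) auto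
  then have "(cmod (regular_polygon n \<alpha> j - regular_polygon n \<alpha> k))\<^sup>2 > 0"
    using assms chord_power2_pos[OF m] by simp
  then show "regular_polygon n \<alpha> j \<noteq> regular_polygon n \<alpha> k"
    by auto
qed

lemma pair_grad_regular_polygon:
  assumes "j \<in> {1..n}" and "m \<in> {1..n-1}"
  shows "pair_grad F' (regular_polygon n \<alpha>) j j (cyc_add n j m)
       = of_real (F' (\<alpha>\<^sup>2 * (chord n m)\<^sup>2)) * regular_polygon n \<alpha> j * (1 - cis (real m * (2 * pi / real n)))"
proof -
  have m: "n > 0" "m \<le> n" using assms(2) by auto
  show ?thesis
    using cyc_add_in_others[OF assms]
    unfolding pair_grad_def
    unfolding cmod_regular_polygon_diff_cyc_add[OF m]
    unfolding regular_polygon_diff_cyc_add[OF m]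
    by simp
qed

lemma V_grad_regular_polygon:
  assumes n: "n \<ge> 2" and \<alpha>: "\<alpha> > 0" and j: "j \<in> {1..n}"
  shows "V_grad n W' (regular_polygon n \<alpha>) j = 2 * regular_polygon n \<alpha> j *
     of_real ((1 - 1 / (\<alpha> * chord n 1)) * (chord n 1)\<^sup>2
              + (\<Sum>m=1..n-1. W' (\<alpha>\<^sup>2 * (chord n m)\<^sup>2) * (chord n m)\<^sup>2) / 2)"
proof -
  let ?P = "regular_polygon n \<alpha>"
  let ?\<zeta> = "2 * pi / real n"
  have s1: "chord n 1 > 0" and sn1: "chord n (n - 1) = chord n 1"
    using n chord_1_pos chord_diff[of 1 n] by auto
  have "real (n - 1) * ?\<zeta> = 2 * pi - ?\<zeta>"
    using n by (simp add: of_nat_diff field_simps)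
  then have cis_sum: "(1 - cis ?\<zeta>) + (1 - cis (real (n - 1) * ?\<zeta>)) = of_real ((chord n 1)\<^sup>2)"
    by (simp add: complex_eq_iff chord_power2)
  have "1 \<in> {1..n-1}" "n - 1 \<in> {1..n-1}"
    using n by auto
  note edge = this[THEN pair_grad_regular_polygon[OF j, of _ U_pot_deriv]]
  have "(\<Sum>i=1..n-1. pair_grad U_pot_deriv ?P j (i+1) i) + pair_grad U_pot_deriv ?P j n 1
      = pair_grad U_pot_deriv ?P j j (cyc_add n j 1) + pair_grad U_pot_deriv ?P j j (cyc_add n j (n-1))"
    by (rule sum_cyclic_edges_local[OF n j pair_grad_commute pair_grad_eq_0])
  also have "\<dots> = ?P j * of_real (U_pot_deriv (\<alpha>\<^sup>2 * (chord n 1)\<^sup>2))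
                     * ((1 - cis ?\<zeta>) + (1 - cis (real (n - 1) * ?\<zeta>)))"
    unfolding edge sn1 by (simp add: algebra_simps)
  also have "U_pot_deriv (\<alpha>\<^sup>2 * (chord n 1)\<^sup>2) = 1 - 1 / (\<alpha> * chord n 1)"
    using \<alpha> s1 by (simp add: U_pot_deriv_def real_sqrt_mult)
  finally have U_part: "(\<Sum>i=1..n-1. pair_grad U_pot_deriv ?P j (i+1) i) + pair_grad U_pot_deriv ?P j n 1
      = ?P j * of_real ((1 - 1 / (\<alpha> * chord n 1)) * (chord n 1)\<^sup>2)"
    unfolding cis_sum by (simp add: mult.assoc)
  have "(\<Sum>p=1..n. \<Sum>q=p+1..n. pair_grad W' ?P j p q) = (\<Sum>m=1..n-1. pair_grad W' ?P j j (cyc_add n j m))"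
    by (rule sum_pairs_local[OF j pair_grad_commute pair_grad_eq_0])
  also have "\<dots> = (\<Sum>m=1..n-1. of_real (W' (\<alpha>\<^sup>2 * (chord n m)\<^sup>2)) * (1 - cis (real m * ?\<zeta>))) * ?P j"
    unfolding sum_distrib_right
    by (rule sum.cong) (simp_all add: pair_grad_regular_polygon[OF j] mult_ac)
  also have "\<dots> = ?P j * of_real ((\<Sum>m=1..n-1. W' (\<alpha>\<^sup>2 * (chord n m)\<^sup>2) * (chord n m)\<^sup>2) / 2)"
    by (subst sum_reflected_weights_1_minus_cis) (auto simp: chord_diff)
  finally show ?thesis
    unfolding V_grad_def U_part by (simp add: algebra_simps)
qed

lemma S_fun_eq:
  "S_fun n W a = 1 / (a * chord n 1)
     - 1 / (2 * (chord n 1)\<^sup>2) * (\<Sum>k=1..n-1. deriv W (a\<^sup>2 * (chord n k)\<^sup>2) * (chord n k)\<^sup>2)"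
  unfolding S_fun_def Let_def chord_def ..

lemma V_grad_regular_polygon_S_fun:
  assumes "n \<ge> 2" and "\<alpha> > 0" and "j \<in> {1..n}"
  shows "V_grad n (deriv W) (regular_polygon n \<alpha>) j
       = of_real (2 * (chord n 1)\<^sup>2 * (1 - S_fun n W \<alpha>)) * regular_polygon n \<alpha> j"
proof -
  have "(1 - 1 / (\<alpha> * chord n 1)) * (chord n 1)\<^sup>2
        + (\<Sum>m=1..n-1. deriv W (\<alpha>\<^sup>2 * (chord n m)\<^sup>2) * (chord n m)\<^sup>2) / 2
      = (chord n 1)\<^sup>2 * (1 - S_fun n W \<alpha>)"
    using assms(2) chord_1_pos[OF assms(1)] by (simp add: S_fun_eq field_simps power2_eq_square)
  then show ?thesis
    unfolding V_grad_regular_polygon[OF assms] by (simp only: of_real_mult of_real_numeral mult_ac)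
qed

lemma filterlim_S_fun_at_right_0:
  assumes "n \<ge> 2" and "filterlim (\<lambda>x. - deriv W x) at_top (at_right 0)"
  shows "filterlim (S_fun n W) at_top (at_right 0)"
proof -
  have s1: "chord n 1 > 0"
    using assms(1) by (rule chord_1_pos)
  have "filterlim (\<lambda>a. inverse a * (1 / chord n 1)) at_top (at_right 0)"
    using s1 by (intro filterlim_at_top_mult_tendsto_pos[OF tendsto_const _ filterlim_inverse_at_top_right]) simp
  then have inv: "filterlim (\<lambda>a. 1 / (a * chord n 1)) at_top (at_right 0)"
    by (simp add: field_simps)
  have "\<forall>\<^sub>F a in at_right 0. deriv W (a\<^sup>2 * (chord n k)\<^sup>2) \<le> 0" if k: "k \<in> {1..n-1}" for k
  proof -
    have "filterlim (\<lambda>a::real. a\<^sup>2 * (chord n k)\<^sup>2) (at_right 0) (at_right 0)"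
      unfolding filterlim_at
    proof
      show "\<forall>\<^sub>F a in at_right 0. a\<^sup>2 * (chord n k)\<^sup>2 \<in> {0<..} \<and> a\<^sup>2 * (chord n k)\<^sup>2 \<noteq> 0"
        using eventually_at_right_less[of "0::real"] by eventually_elim (use chord_power2_pos[OF k] in auto)
      show "((\<lambda>a::real. a\<^sup>2 * (chord n k)\<^sup>2) \<longlongrightarrow> 0) (at_right 0)"
        by (auto intro!: tendsto_eq_intros)
    qed
    from filterlim_compose[OF assms(2) this]
    have "\<forall>\<^sub>F a in at_right 0. 0 \<le> - deriv W (a\<^sup>2 * (chord n k)\<^sup>2)"
      unfolding filterlim_at_top by (rule spec)
    then show ?thesis
      by eventually_elim simp
  qed
  then have "\<forall>\<^sub>F a in at_right 0. \<forall>k\<in>{1..n-1}. deriv W (a\<^sup>2 * (chord n k)\<^sup>2) \<le> 0"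
    by (simp add: eventually_ball_finite)
  then have "\<forall>\<^sub>F a in at_right 0. 1 / (a * chord n 1) \<le> S_fun n W a"
  proof eventually_elim
    case (elim a)
    then have "(\<Sum>k=1..n-1. deriv W (a\<^sup>2 * (chord n k)\<^sup>2) * (chord n k)\<^sup>2) \<le> 0"
      by (intro sum_nonpos mult_nonpos_nonneg) auto
    then show ?case
      unfolding S_fun_eq using s1 by (simp add: divide_nonpos_pos)
  qed
  then show ?thesis
    by (rule filterlim_at_top_mono[OF inv])
qed

lemma tendsto_S_fun_at_top:
  assumes "n \<ge> 2" and "(deriv W \<longlongrightarrow> 0) at_top"
  shows "(S_fun n W \<longlongrightarrow> 0) at_top"
proof -
  have s1: "chord n 1 > 0"
    using assms(1) by (rule chord_1_pos)
  have "filterlim (\<lambda>a::real. a * chord n 1) at_infinity at_top"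
    using s1 by (intro filterlim_at_top_imp_at_infinity filterlim_at_top_mult_tendsto_pos[OF tendsto_const _ filterlim_ident])
  then have inv: "((\<lambda>a. 1 / (a * chord n 1)) \<longlongrightarrow> 0) at_top"
    by (rule tendsto_divide_0[OF tendsto_const])
  have "((\<lambda>a. deriv W (a\<^sup>2 * (chord n k)\<^sup>2) * (chord n k)\<^sup>2) \<longlongrightarrow> 0) at_top"
    if k: "k \<in> {1..n-1}" for k
  proof -
    have "filterlim (\<lambda>a::real. a\<^sup>2 * (chord n k)\<^sup>2) at_top at_top"
      by (rule filterlim_at_top_mult_tendsto_pos[OF tendsto_const chord_power2_pos[OF k]])
         (rule filterlim_pow_at_top[OF _ filterlim_ident], simp)
    from filterlim_compose[OF assms(2) this]
    show ?thesis
      by (rule tendsto_mult_left_zero)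
  qed
  then have "((\<lambda>a. \<Sum>k=1..n-1. deriv W (a\<^sup>2 * (chord n k)\<^sup>2) * (chord n k)\<^sup>2) \<longlongrightarrow> 0) at_top"
    by (rule tendsto_null_sum)
  then have "((\<lambda>a. 1 / (a * chord n 1) - 1 / (2 * (chord n 1)\<^sup>2)
               * (\<Sum>k=1..n-1. deriv W (a\<^sup>2 * (chord n k)\<^sup>2) * (chord n k)\<^sup>2)) \<longlongrightarrow> 0 - 0) at_top"
    by (intro tendsto_diff inv tendsto_mult_right_zero)
  then show ?thesis
    unfolding S_fun_eq[abs_def] by simp
qed

lemma continuous_on_S_fun:
  assumes "n \<ge> 2" and "continuous_on {0<..} (deriv W)"
  shows "continuous_on {0<..} (S_fun n W)"
proof -
  have "continuous_on {0<..} (\<lambda>a. deriv W (a\<^sup>2 * (chord n k)\<^sup>2))" if k: "k \<in> {1..n-1}" for k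
    by (rule continuous_on_compose2[OF assms(2)]) (use chord_power2_pos[OF k] in \<open>auto intro!: continuous_intros\<close>)
  then show ?thesis
    using chord_1_pos[OF assms(1)] unfolding S_fun_eq[abs_def] by (auto intro!: continuous_intros)
qed

lemma exists_eq_between_limits:
  fixes f :: "real \<Rightarrow> real"
  assumes "continuous_on {0<..} f" and "filterlim f at_top (at_right 0)"
    and "(f \<longlongrightarrow> l) at_top" and "l < c"
  shows "\<exists>x>0. f x = c"
proof -
  have "\<forall>\<^sub>F x in at_right 0. c \<le> f x"
    using assms(2) unfolding filterlim_at_top by (rule spec)
  then obtain b where "b > 0" and b: "\<And>x. 0 < x \<Longrightarrow> x < b \<Longrightarrow> c \<le> f x"
    unfolding eventually_at_right_field by blast
  define a where "a = b / 2"
  have a: "a > 0" "c \<le> f a"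
    using \<open>b > 0\<close> b[of a] by (auto simp: a_def)
  have "\<forall>\<^sub>F x in at_top. f x < c \<and> a \<le> x"
    using order_tendstoD(2)[OF assms(3,4)] eventually_ge_at_top[of a] by (rule eventually_conj)
  then obtain x where "\<forall>y\<ge>x. f y < c \<and> a \<le> y"
    unfolding eventually_at_top_linorder by blast
  then have x: "f x < c" "a \<le> x"
    by auto
  have "continuous_on {a..x} f"
    by (rule continuous_on_subset[OF assms(1)]) (use a(1) in auto)
  with x a(2) obtain y where "a \<le> y" "f y = c"
    using IVT2'[of f x c a] by force
  then show ?thesis
    using a(1) by (intro exI[of _ y]) auto
qed

lemma C2_pos_has_real_derivative:
  "C2_pos W \<Longrightarrow> x > 0 \<Longrightarrow> (W has_real_derivative deriv W x) (at x)"
  unfolding C2_pos_def by (simp add: DERIV_deriv_iff_real_differentiable)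

lemma C2_pos_continuous_on_deriv: "C2_pos W \<Longrightarrow> continuous_on {0<..} (deriv W)"
  unfolding C2_pos_def
  by (metis continuous_at_imp_continuous_on differentiable_imp_continuous_within greaterThan_iff)

theorem corollary2:
  fixes n :: nat and W :: "real \<Rightarrow> real"
  assumes "n \<ge> 2"
    and "C2_pos W"
    and "filterlim W at_top (at_right 0)"
    and "filterlim (\<lambda>x. - deriv W x) at_top (at_right 0)"
    and "(W \<longlongrightarrow> 0) at_top"
    and "(deriv W \<longlongrightarrow> 0) at_top"
  shows "filterlim (S_fun n W) at_top (at_right 0)
    \<and> (S_fun n W \<longlongrightarrow> 0) at_top
    \<and> (\<exists>\<alpha>>0. S_fun n W \<alpha> = 1)
    \<and> (\<forall>\<alpha>>0. S_fun n W \<alpha> = 1 \<longrightarrow>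
          critical_point n W (\<lambda>j. complex_of_real \<alpha> * cis (real j * (2 * pi / real n))))"
proof (intro conjI allI impI)
  show at_0: "filterlim (S_fun n W) at_top (at_right 0)"
    using filterlim_S_fun_at_right_0[OF assms(1,4)] .
  show at_top: "(S_fun n W \<longlongrightarrow> 0) at_top"
    using tendsto_S_fun_at_top[OF assms(1,6)] .
  show "\<exists>\<alpha>>0. S_fun n W \<alpha> = 1"
    using continuous_on_S_fun[OF assms(1) C2_pos_continuous_on_deriv[OF assms(2)]] at_0 at_top
    by (rule exists_eq_between_limits) simp
next
  fix \<alpha> :: real assume "\<alpha> > 0" and "S_fun n W \<alpha> = 1"
  then have "V_grad n (deriv W) (regular_polygon n \<alpha>) j = 0" if "j \<in> {1..n}" for j
    using V_grad_regular_polygon_S_fun[OF assms(1) \<open>\<alpha> > 0\<close> that, of W] by simp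
  then have "critical_point n W (regular_polygon n \<alpha>)"
    using assms(1) \<open>\<alpha> > 0\<close> C2_pos_has_real_derivative[OF assms(2)]
    by (intro critical_point_if_V_grad_eq_0 regular_polygon_in_Omega) auto
  then show "critical_point n W (\<lambda>j. complex_of_real \<alpha> * cis (real j * (2 * pi / real n)))"
    by (simp add: regular_polygon_def)
qed

end
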